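(* Let $X$ be a complete metric space, let $f:X\to\mathbb{R}$ be a continuous function, let $r_0>0$, $k>0$, assume $f$ is strongly slope-regular on $[0<f<r_0]$, and let $\varphi\in\mathcal{K}(0,r_0)$. The following assertions are equivalent: (i) the multivalued mapping $x\mapsto[(\varphi\circ f)(x),+\infty)$ is $k$-metrically regular on $[0<f<r_0]\times(0,\varphi(r_0))$; (ii) for all $r_1,r_2\in(0,r_0)$, $\operatorname{Dist}([f=r_1],[f=r_2])\le k\,|\varphi(r_1)-\varphi(r_2)|$; (iii) for all $x\in[0<f<r_0]$, $|\nabla(\varphi\circ f)|(x)\ge\frac1k$.
   Context: $f$ is strongly slope-regular on a set $S$ if $|\nabla f|(x)=|\nabla(-f)|(x)$ for every $x\in S$, where the strong slope is $|\nabla g|(x)=\limsup_{y\to x}\frac{(g(x)-g(y))^+}{d(x,y)}$, $a^+=\max\{a,0\}$. $\mathcal{K}(0,r_0)$ is the set of $\varphi\in C([0,r_0))\cap C^1(0,r_0)$ with $\varphi(0)=0$ and $\varphi'>0$ on $(0,r_0)$; $\varphi(r_0):=\lim_{r\uparrow r_0}\varphi(r)$. $[f=r]=\{x:f(x)=r\}$, $[0<f<r_0]=\{x:0<f(x)<r_0\}$. $\operatorname{Dist}(S_1,S_2)=\max\{\sup_{x\in S_1}\operatorname{dist}(x,S_2),\sup_{x\in S_2}\operatorname{dist}(x,S_1)\}$ is the Hausdorff distance. A multivalued map $F:X\rightrightarrows Y$ is $k$-metrically regular at $(\bar x,\bar y)\in\operatorname{Graph}F$ if there exist $\varepsilon,\delta>0$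 with $\operatorname{dist}(x,F^{-1}(y))\le k\operatorname{dist}(y,F(x))$ for all $(x,y)\in B(\bar x,\varepsilon)\times B(\bar y,\delta)$; on $V$ if so at every point of $\operatorname{Graph}F\cap V$. *)

theory Defs
  imports "HOL-Analysis.Analysis"
begin

definition strong_slope :: "('a::metric_space \<Rightarrow> real) \<Rightarrow> 'a \<Rightarrow> ereal" where
  "strong_slope g x =
     (if x islimpt UNIV
      then Limsup (at x) (\<lambda>y. ereal (max (g x - g y) 0 / dist x y))
      else 0)"

definition strongly_slope_regular :: "('a::metric_space \<Rightarrow> real) \<Rightarrow> 'a set \<Rightarrow> bool" where
  "strongly_slope_regular f S \<longleftrightarrow>
     (\<forall>x\<in>S. strong_slope f x = strong_slope (\<lambda>y. - f y) x)"

definition class_K :: "real \<Rightarrow> (real \<Rightarrow> real) set" where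
  "class_K r0 = {\<phi>. continuous_on {0..<r0} \<phi> \<and> \<phi> 0 = 0 \<and>
      (\<exists>\<phi>'. (\<forall>r\<in>{0<..<r0}. (\<phi> has_real_derivative \<phi>' r) (at r))
           \<and> continuous_on {0<..<r0} \<phi>' \<and> (\<forall>r\<in>{0<..<r0}. 0 < \<phi>' r))}"

text \<open>phi(r0) := lim_{r -> r0-} phi(r), in the extended reals (may be +infinity).\<close>
definition K_end :: "(real \<Rightarrow> real) \<Rightarrow> real \<Rightarrow> ereal" where
  "K_end \<phi> r0 = Lim (at_left r0) (\<lambda>r. ereal (\<phi> r))"

text \<open>Distance from a point to a set, extended-real valued (+infinity for the empty set).\<close>
definition edist_set :: "'a::metric_space \<Rightarrow> 'a set \<Rightarrow> ereal" where
  "edist_set x S = (INF s\<in>S. ereal (dist x s))"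

definition hausdorff_edist :: "'a::metric_space set \<Rightarrow> 'a set \<Rightarrow> ereal" where
  "hausdorff_edist S1 S2 =
     max (SUP x\<in>S1. edist_set x S2) (SUP x\<in>S2. edist_set x S1)"

definition metric_regular_at ::
  "real \<Rightarrow> ('a::metric_space \<Rightarrow> 'b::metric_space set) \<Rightarrow> 'a \<Rightarrow> 'b \<Rightarrow> bool" where
  "metric_regular_at k F xb yb \<longleftrightarrow>
     (\<exists>\<epsilon>>0. \<exists>\<delta>>0. \<forall>x\<in>ball xb \<epsilon>. \<forall>y\<in>ball yb \<delta>.
        edist_set x {x'. y \<in> F x'} \<le> ereal k * edist_set y (F x))"

definition metric_regular_on ::
  "real \<Rightarrow> ('a::metric_space \<Rightarrow> 'b::metric_space set) \<Rightarrow> ('a \<times> 'b) set \<Rightarrow> bool" where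
  "metric_regular_on k F V \<longleftrightarrow>
     (\<forall>(x, y)\<in>V. y \<in> F x \<longrightarrow> metric_regular_at k F x y)"

end

theory Submission
  imports Defs
begin

text \<open>
  Assume (iii). Ekeland's principle applied to \<open>\<phi> \<circ> f\<close> on a band of levels yields, for
  every \<open>k' > k\<close>, a point \<open>z\<close> on any lower level \<open>r\<close> with
  \<open>dist x z \<le> k' (\<phi> (f x) - \<phi> r)\<close>, since an Ekeland point strictly inside the band would
  have slope at most \<open>1/k'\<close>. Slope regularity and the chain rule give the same slope bound
  for \<open>-\<phi> \<circ> f\<close>, which handles higher levels. This yields the Hausdorff estimate (ii), and
  also (i), because the level set of \<open>f\<close> where \<open>\<phi> \<circ> f = y\<close> lies in the preimage of \<open>y\<close>.
  Conversely, (i) and (ii) each provide, arbitrarily close to \<open>x\<close>, points where \<open>\<phi> \<circ> f\<close>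
  has dropped by some \<open>D > 0\<close> at distance at most \<open>k' D\<close>, which bounds the slope from
  below by \<open>1/k\<close>.
\<close>

section \<open>Ekeland's variational principle\<close>

lemma nested_closed_family_fixpoint:
  fixes T :: "'a::complete_space \<Rightarrow> 'a set"
  assumes closed: "\<And>x. x \<in> S \<Longrightarrow> closed (T x)"
    and self: "\<And>x. x \<in> S \<Longrightarrow> x \<in> T x"
    and into: "\<And>x. x \<in> S \<Longrightarrow> T x \<subseteq> S"
    and trans: "\<And>x w. x \<in> S \<Longrightarrow> w \<in> T x \<Longrightarrow> T w \<subseteq> T x"
    and shrink: "\<And>x e. x \<in> S \<Longrightarrow> e > 0 \<Longrightarrow> \<exists>y\<in>T x. T y \<subseteq> cball y e"
    and x0: "x0 \<in> S"
  obtains z where "z \<in> T x0" "T z = {z}"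
proof -
  have "\<forall>n. \<forall>x\<in>S. \<exists>y. y \<in> T x \<and> T y \<subseteq> cball y ((1/2)^n)"
  proof (intro allI ballI)
    show "\<exists>y. y \<in> T x \<and> T y \<subseteq> cball y ((1/2)^n)" if "x \<in> S" for n x
      using shrink[OF that, of "(1/2)^n"] by auto
  qed
  then obtain next_pt where next_pt:
    "\<And>n x. x \<in> S \<Longrightarrow> next_pt n x \<in> T x \<and> T (next_pt n x) \<subseteq> cball (next_pt n x) ((1/2)^n)"
    by metis
  define xs where "xs = rec_nat x0 next_pt"
  have xs_Suc: "xs (Suc n) = next_pt n (xs n)" for n by (simp add: xs_def)
  have xs_step: "xs n \<in> S \<and> xs (Suc n) \<in> T (xs n) \<and> T (xs (Suc n)) \<subseteq> cball (xs (Suc n)) ((1/2)^n)"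
    for n
  proof (induction n)
    case 0
    show ?case using next_pt[OF x0, of 0] x0 by (simp add: xs_def)
  next
    case (Suc n)
    then have "xs (Suc n) \<in> S" using into by blast
    then show ?case using next_pt[of "xs (Suc n)" "Suc n"] by (simp add: xs_Suc[of "Suc n"])
  qed
  have decr: "T (xs n) \<subseteq> T (xs m)" if "m \<le> n" for m n
    using that
  proof (induction n)
    case (Suc n)
    show ?case
    proof (cases "m = Suc n")
      case False
      then have "T (xs n) \<subseteq> T (xs m)" using Suc by simp
      moreover have "T (xs (Suc n)) \<subseteq> T (xs n)" using trans xs_step[of n] by blast
      ultimately show ?thesis by blast
    qed simp
  qed simp
  obtain z where z: "\<Inter>(range (\<lambda>n. T (xs n))) = {z}"
  proof -
    have "\<exists>z. \<Inter>(range (\<lambda>n. T (xs n))) = {z}"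
    proof (rule decreasing_closed_nest_sing)
      show "closed (T (xs n))" "T (xs n) \<noteq> {}" for n using closed self xs_step by blast+
      show "T (xs n) \<subseteq> T (xs m)" if "m \<le> n" for m n using decr that .
      fix e :: real assume "e > 0"
      then obtain n where n: "(1/2::real)^n < e / 2" using real_arch_pow_inv[of "e/2" "1/2"] by auto
      show "\<exists>n. \<forall>x\<in>T (xs n). \<forall>y\<in>T (xs n). dist x y < e"
      proof (intro exI[of _ "Suc n"] ballI)
        fix x y assume "x \<in> T (xs (Suc n))" "y \<in> T (xs (Suc n))"
        then have "dist (xs (Suc n)) x \<le> (1/2)^n" "dist (xs (Suc n)) y \<le> (1/2)^n"
          using xs_step[of n] by auto
        then show "dist x y < e" using n dist_triangle3[of x y "xs (Suc n)"] by linarith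
      qed
    qed
    then show ?thesis using that by blast
  qed
  then have z_in: "z \<in> T (xs n)" for n by blast
  then have "T z \<subseteq> T (xs n)" for n using trans[of "xs n" z] xs_step[of n] by blast
  then have "T z \<subseteq> \<Inter>(range (\<lambda>n. T (xs n)))" by blast
  then have "T z \<subseteq> {z}" using z by simp
  moreover have "z \<in> T x0" using z_in[of 0] by (simp add: xs_def)
  moreover from this have "z \<in> T z" using into[OF x0] self by blast
  ultimately show ?thesis using that by blast
qed

lemma ekeland_variational_principle:
  fixes h :: "'a::complete_space \<Rightarrow> real"
  assumes S: "closed S" and h: "continuous_on S h" and h_nonneg: "\<And>w. w \<in> S \<Longrightarrow> 0 \<le> h w"
    and x0: "x0 \<in> S" and lam: "lam > 0"
  obtains z where "z \<in> S" "h z + lam * dist x0 z \<le> h x0"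
    "\<And>w. w \<in> S \<Longrightarrow> w \<noteq> z \<Longrightarrow> h z < h w + lam * dist z w"
proof -
  define T where "T x = {w \<in> S. h w + lam * dist x w \<le> h x}" for x
  have T_trans: "T w \<subseteq> T x" if "w \<in> T x" for x w
  proof
    fix v assume "v \<in> T w"
    moreover have "lam * dist x v \<le> lam * dist x w + lam * dist w v"
      using dist_triangle[of x v w] lam by (simp add: distrib_left[symmetric])
    ultimately show "v \<in> T x" using that by (auto simp: T_def)
  qed
  have T_closed: "closed (T x)" for x
    unfolding T_def using S h by (intro continuous_on_closed_Collect_le continuous_intros)
  have T_shrink: "\<exists>y\<in>T x. T y \<subseteq> cball y e" if "x \<in> S" "e > 0" for x e
  proof -
    \<comment> \<open>An almost minimiser of h on T x: every w \<in> T y then satisfies lam * dist y w \<le> h y - h w < lam * e.\<close>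
    have "x \<in> T x" using that by (simp add: T_def)
    then have "T x \<noteq> {}" by blast
    moreover have "bdd_below (h ` T x)" using h_nonneg by (auto simp: T_def intro!: bdd_belowI[of _ 0])
    moreover have "(INF w\<in>T x. h w) < (INF w\<in>T x. h w) + lam * e" using lam that by simp
    ultimately obtain v where "v \<in> h ` T x" "v < (INF w\<in>T x. h w) + lam * e"
      using cInf_lessD[of "h ` T x"] by blast
    then obtain y where y: "y \<in> T x" "h y < (INF w\<in>T x. h w) + lam * e" by blast
    have "dist y w \<le> e" if "w \<in> T y" for w
    proof -
      have "(INF w\<in>T x. h w) \<le> h w"
        using T_trans[OF y(1)] that \<open>bdd_below (h ` T x)\<close> by (auto intro: cINF_lower)
      then have "lam * dist y w < lam * e" using y that by (auto simp: T_def)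
      then show ?thesis using lam by simp
    qed
    then have "T y \<subseteq> cball y e" by (auto simp: mem_cball)
    with y(1) show ?thesis by blast
  qed
  obtain z where z: "z \<in> T x0" "T z = {z}"
  proof (rule nested_closed_family_fixpoint[of S T x0])
    show "closed (T x)" for x by (rule T_closed)
    show "x \<in> T x" if "x \<in> S" for x using that by (simp add: T_def)
    show "T x \<subseteq> S" for x by (auto simp: T_def)
    show "T w \<subseteq> T x" if "w \<in> T x" for x w using that by (rule T_trans)
    show "\<exists>y\<in>T x. T y \<subseteq> cball y e" if "x \<in> S" "e > 0" for x e using that by (rule T_shrink)
  qed (use x0 in blast)+
  show ?thesis
  proof
    show "z \<in> S" "h z + lam * dist x0 z \<le> h x0" using z(1) by (auto simp: T_def)
    show "h z < h w + lam * dist z w" if "w \<in> S" "w \<noteq> z" for w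
    proof -
      have "w \<notin> T z" using z(2) that(2) by blast
      then show ?thesis using that(1) by (simp add: T_def)
    qed
  qed
qed

section \<open>Strong slopes\<close>

lemma strong_slope_nonneg: "0 \<le> strong_slope g x"
proof (cases "x islimpt UNIV")
  case True
  then have "at x \<noteq> bot" by (simp add: trivial_limit_within)
  then have "0 \<le> Limsup (at x) (\<lambda>y. ereal (max (g x - g y) 0 / dist x y))"
    by (rule le_Limsup) (auto intro!: always_eventually)
  then show ?thesis using True by (simp add: strong_slope_def)
qed (simp add: strong_slope_def)

lemma strong_slope_le:
  assumes "c \<ge> 0" and "eventually (\<lambda>y. g x - g y \<le> c * dist x y) (at x)"
  shows "strong_slope g x \<le> ereal c"
proof -
  have "eventually (\<lambda>y. ereal (max (g x - g y) 0 / dist x y) \<le> ereal c) (at x)"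
    using assms(2) unfolding eventually_at_filter
    by eventually_elim (use assms(1) in \<open>auto simp: divide_le_eq max_def mult.commute\<close>)
  then have "Limsup (at x) (\<lambda>y. ereal (max (g x - g y) 0 / dist x y)) \<le> ereal c"
    by (rule Limsup_bounded)
  then show ?thesis using assms(1) by (simp add: strong_slope_def)
qed

lemma strong_slope_ge_inverse:
  assumes k: "k > 0"
    and steep: "\<And>k' \<delta>. k < k' \<Longrightarrow> \<delta> > 0 \<Longrightarrow>
      \<exists>y. dist x y < \<delta> \<and> 0 < g x - g y \<and> dist x y \<le> k' * (g x - g y)"
  shows "ereal (1/k) \<le> strong_slope g x"
proof -
  have "x islimpt UNIV"
    unfolding islimpt_approachable
  proof (intro allI impI)
    fix e :: real assume "e > 0"
    then obtain y where "dist x y < e" "0 < g x - g y" using steep[of "k + 1" e] by auto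
    then have "y \<noteq> x" "dist y x < e" by (auto simp: dist_commute)
    then show "\<exists>x'\<in>UNIV. x' \<noteq> x \<and> dist x' x < e" by blast
  qed
  moreover have "ereal (1/k) \<le> Limsup (at x) (\<lambda>y. ereal (max (g x - g y) 0 / dist x y))"
    (is "_ \<le> ?L")
  proof (rule ccontr)
    assume "\<not> ?thesis"
    then have "?L < ereal (1/k)" by simp
    then obtain c where c: "?L < ereal c" "ereal c < ereal (1/k)"
      using ereal_dense2 by blast
    have "0 \<le> ?L" using strong_slope_nonneg[of g x] \<open>x islimpt UNIV\<close> by (simp add: strong_slope_def)
    then have "0 < ereal c" using c(1) by (rule order.strict_trans1)
    then have "0 < c" by simp
    have "eventually (\<lambda>y. max (g x - g y) 0 / dist x y < c) (at x)"
      using Limsup_lessD[OF c(1)] by simp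
    then obtain \<delta> where "\<delta> > 0" and \<delta>: "\<And>y. y \<noteq> x \<Longrightarrow> dist y x < \<delta> \<Longrightarrow> max (g x - g y) 0 / dist x y < c"
      unfolding eventually_at by auto
    have "k < 1/c" using c(2) k \<open>0 < c\<close> by (simp add: field_simps)
    then obtain y where y: "dist x y < \<delta>" "0 < g x - g y" "dist x y \<le> (1/c) * (g x - g y)"
      using steep \<open>\<delta> > 0\<close> by blast
    then have "y \<noteq> x" by auto
    moreover have "dist y x < \<delta>" using y(1) by (simp add: dist_commute)
    ultimately have "max (g x - g y) 0 / dist x y < c" using \<delta> by blast
    then have "(g x - g y) / dist x y < c" using y(2) by (simp add: max_def)
    then show False using y \<open>0 < c\<close> \<open>y \<noteq> x\<close> by (simp add: field_simps)
  qed
  ultimately show ?thesis by (simp add: strong_slope_def)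
qed

lemma has_real_derivative_pos_local_bounds:
  fixes \<psi> :: "real \<Rightarrow> real"
  assumes der: "(\<psi> has_real_derivative d) (at t)" and c: "0 < c1" "c1 < d" "d < c2"
  obtains \<delta> where "\<delta> > 0"
    "\<And>s. \<bar>s - t\<bar> < \<delta> \<Longrightarrow> c1 * max (t - s) 0 \<le> max (\<psi> t - \<psi> s) 0"
    "\<And>s. \<bar>s - t\<bar> < \<delta> \<Longrightarrow> max (\<psi> t - \<psi> s) 0 \<le> c2 * max (t - s) 0"
proof -
  define e where "e = min (d - c1) (c2 - d)"
  have "e > 0" using c by (simp add: e_def)
  moreover have "(\<psi> has_derivative (\<lambda>h. d * h)) (at t)"
    using der by (simp add: has_field_derivative_def)
  ultimately obtain \<delta> where "\<delta> > 0"
    and \<delta>: "\<And>s. norm (s - t) < \<delta> \<Longrightarrow> norm (\<psi> s - \<psi> t - d * (s - t)) \<le> e * norm (s - t)"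
    unfolding has_derivative_at_alt by blast
  have bounds: "c1 * max (t - s) 0 \<le> max (\<psi> t - \<psi> s) 0 \<and> max (\<psi> t - \<psi> s) 0 \<le> c2 * max (t - s) 0"
    if "\<bar>s - t\<bar> < \<delta>" for s
  proof -
    have near: "\<bar>(\<psi> t - \<psi> s) - d * (t - s)\<bar> \<le> e * \<bar>t - s\<bar>"
      using \<delta>[of s] that by (simp add: abs_minus_commute algebra_simps)
    show ?thesis
    proof (cases "s \<le> t")
      case True
      have "c1 * (t - s) \<le> (d - e) * (t - s)" "(d + e) * (t - s) \<le> c2 * (t - s)"
        using True by (intro mult_right_mono; simp add: e_def)+
      moreover have "(d - e) * (t - s) \<le> \<psi> t - \<psi> s" "\<psi> t - \<psi> s \<le> (d + e) * (t - s)"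
        using near True by (simp_all add: abs_le_iff algebra_simps)
      moreover have "0 \<le> c1 * (t - s)" using True c by simp
      ultimately show ?thesis using True by (simp add: max_def)
    next
      case False
      have "0 < (d - e) * (s - t)" using False c by (simp add: e_def)
      moreover have "\<psi> t - \<psi> s \<le> - ((d - e) * (s - t))"
        using near False by (simp add: abs_le_iff algebra_simps)
      ultimately show ?thesis using False by (simp add: max_def)
    qed
  qed
  show ?thesis using \<open>\<delta> > 0\<close> bounds by (intro that) auto
qed

lemma strong_slope_compose_bounds:
  fixes f :: "'a::metric_space \<Rightarrow> real"
  assumes f: "isCont f x" and der: "(\<psi> has_real_derivative d) (at (f x))"
    and c: "0 < c1" "c1 < d" "d < c2"
  shows "ereal c1 * strong_slope f x \<le> strong_slope (\<lambda>y. \<psi> (f y)) x"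
    and "strong_slope (\<lambda>y. \<psi> (f y)) x \<le> ereal c2 * strong_slope f x"
proof -
  define R where "R g = (\<lambda>y. ereal (max (g x - g y) 0 / dist x y))" for g :: "'a \<Rightarrow> real"
  obtain \<delta> where "\<delta> > 0"
    and lo: "\<And>s. \<bar>s - f x\<bar> < \<delta> \<Longrightarrow> c1 * max (f x - s) 0 \<le> max (\<psi> (f x) - \<psi> s) 0"
    and up: "\<And>s. \<bar>s - f x\<bar> < \<delta> \<Longrightarrow> max (\<psi> (f x) - \<psi> s) 0 \<le> c2 * max (f x - s) 0"
    using has_real_derivative_pos_local_bounds[OF der c] by metis
  have "eventually (\<lambda>y. dist (f y) (f x) < \<delta>) (at x)"
    using f \<open>\<delta> > 0\<close> unfolding isCont_def by (rule tendstoD)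
  then have near: "eventually (\<lambda>y. ereal c1 * R f y \<le> R (\<lambda>y. \<psi> (f y)) y \<and>
      R (\<lambda>y. \<psi> (f y)) y \<le> ereal c2 * R f y) (at x)"
  proof eventually_elim
    case (elim y)
    then have "\<bar>f y - f x\<bar> < \<delta>" by (simp add: dist_real_def)
    from divide_right_mono[OF lo[OF this]] divide_right_mono[OF up[OF this]]
    show ?case by (simp add: R_def)
  qed
  have "ereal c1 * strong_slope f x \<le> strong_slope (\<lambda>y. \<psi> (f y)) x \<and>
      strong_slope (\<lambda>y. \<psi> (f y)) x \<le> ereal c2 * strong_slope f x"
  proof (cases "x islimpt UNIV")
    case True
    then have slope: "strong_slope g x = Limsup (at x) (R g)" for g
      by (simp add: strong_slope_def R_def)
    have "at x \<noteq> bot" using True by (simp add: trivial_limit_within)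
    then have "Limsup (at x) (\<lambda>y. ereal c * R f y) = ereal c * Limsup (at x) (R f)" if "c \<ge> 0" for c
      using that by (intro Limsup_ereal_mult_left) auto
    moreover have "Limsup (at x) (\<lambda>y. ereal c1 * R f y) \<le> Limsup (at x) (R (\<lambda>y. \<psi> (f y)))"
      "Limsup (at x) (R (\<lambda>y. \<psi> (f y))) \<le> Limsup (at x) (\<lambda>y. ereal c2 * R f y)"
      using near by (auto intro!: Limsup_mono elim: eventually_mono)
    ultimately show ?thesis unfolding slope using c by auto
  qed (simp add: strong_slope_def)
  then show "ereal c1 * strong_slope f x \<le> strong_slope (\<lambda>y. \<psi> (f y)) x"
    "strong_slope (\<lambda>y. \<psi> (f y)) x \<le> ereal c2 * strong_slope f x"
    by auto
qed

lemma strong_slope_compose: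
  fixes f :: "'a::metric_space \<Rightarrow> real"
  assumes f: "isCont f x" and der: "(\<psi> has_real_derivative d) (at (f x))" and "d > 0"
  shows "strong_slope (\<lambda>y. \<psi> (f y)) x = ereal d * strong_slope f x"
proof -
  define A where "A = strong_slope f x"
  define B where "B = strong_slope (\<lambda>y. \<psi> (f y)) x"
  have lower: "ereal c * A \<le> B" if "0 < c" "c < d" for c
    using strong_slope_compose_bounds(1)[OF f der that, of "d + 1"] by (simp add: A_def B_def)
  have upper: "B \<le> ereal c * A" if "d < c" for c
    using strong_slope_compose_bounds(2)[OF f der _ _ that, of "d / 2"] \<open>d > 0\<close>
    by (simp add: A_def B_def)
  show ?thesis
  proof (cases A)
    case (real a)
    have "((\<lambda>c. ereal (c * a)) \<longlongrightarrow> ereal (d * a)) (at_left d)"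
      "((\<lambda>c. ereal (c * a)) \<longlongrightarrow> ereal (d * a)) (at_right d)"
      by (intro tendsto_intros)+
    moreover have "eventually (\<lambda>c. ereal (c * a) \<le> B) (at_left d)"
      using eventually_at_left_real[OF \<open>d > 0\<close>] by eventually_elim (use lower real in auto)
    moreover have "eventually (\<lambda>c. B \<le> ereal (c * a)) (at_right d)"
      using eventually_at_right_less[of d] by eventually_elim (use upper real in auto)
    ultimately have "ereal (d * a) \<le> B" "B \<le> ereal (d * a)"
      by (auto intro: tendsto_upperbound tendsto_lowerbound)
    then show ?thesis using real by (simp add: A_def B_def)
  next
    case PInf
    then show ?thesis using lower[of "d / 2"] \<open>d > 0\<close> by (simp add: A_def B_def)
  next
    case MInf
    then show ?thesis using strong_slope_nonneg[of f x] by (simp add: A_def)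
  qed
qed

lemma strong_slope_neg_compose:
  fixes f :: "'a::metric_space \<Rightarrow> real"
  assumes f: "isCont f x" and der: "(\<psi> has_real_derivative d) (at (f x))" and "d > 0"
    and regular: "strong_slope f x = strong_slope (\<lambda>y. - f y) x"
  shows "strong_slope (\<lambda>y. - \<psi> (f y)) x = strong_slope (\<lambda>y. \<psi> (f y)) x"
proof -
  have "((\<lambda>t. \<psi> (- t)) has_real_derivative d * (- 1)) (at (- f x))"
    by (rule DERIV_chain2[of \<psi>]) (use der in \<open>auto intro!: derivative_eq_intros\<close>)
  then have "((\<lambda>t. - \<psi> (- t)) has_real_derivative d) (at (- f x))"
    using DERIV_minus by fastforce
  with strong_slope_compose[where f = "\<lambda>y. - f y" and \<psi> = "\<lambda>t. - \<psi> (- t)"] \<open>d > 0\<close> f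
  have "strong_slope (\<lambda>y. - \<psi> (f y)) x = ereal d * strong_slope (\<lambda>y. - f y) x"
    by (simp add: isCont_minus)
  then show ?thesis using strong_slope_compose[OF f der \<open>d > 0\<close>] regular by simp
qed

section \<open>The class K\<close>

lemma class_K_derivE:
  assumes "\<phi> \<in> class_K r0"
  obtains \<phi>' where "\<And>r. 0 < r \<Longrightarrow> r < r0 \<Longrightarrow> (\<phi> has_real_derivative \<phi>' r) (at r)"
    "\<And>r. 0 < r \<Longrightarrow> r < r0 \<Longrightarrow> 0 < \<phi>' r"
proof -
  from assms obtain \<phi>' where
    "\<forall>r\<in>{0<..<r0}. (\<phi> has_real_derivative \<phi>' r) (at r)" "\<forall>r\<in>{0<..<r0}. 0 < \<phi>' r"
    unfolding class_K_def by blast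
  then show ?thesis by (intro that[of \<phi>']) auto
qed

lemma class_K_continuous_on: "\<phi> \<in> class_K r0 \<Longrightarrow> continuous_on {0..<r0} \<phi>"
  by (simp add: class_K_def)

lemma class_K_zero: "\<phi> \<in> class_K r0 \<Longrightarrow> \<phi> 0 = 0"
  by (simp add: class_K_def)

lemma class_K_strict_mono_on:
  assumes "\<phi> \<in> class_K r0"
  shows "strict_mono_on {0..<r0} \<phi>"
proof (rule strict_mono_onI)
  obtain \<phi>' where der: "\<And>r. 0 < r \<Longrightarrow> r < r0 \<Longrightarrow> (\<phi> has_real_derivative \<phi>' r) (at r)"
    and pos: "\<And>r. 0 < r \<Longrightarrow> r < r0 \<Longrightarrow> 0 < \<phi>' r"
    using class_K_derivE[OF assms] by blast
  fix s t assume st: "s \<in> {0..<r0}" "t \<in> {0..<r0}" "s < t"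
  show "\<phi> s < \<phi> t"
  proof (rule DERIV_pos_imp_increasing_open[OF \<open>s < t\<close>])
    show "\<exists>y. (\<phi> has_real_derivative y) (at r) \<and> 0 < y" if "s < r" "r < t" for r
      using der pos that st by (meson atLeastLessThan_iff le_less_trans less_trans)
    show "continuous_on {s..t} \<phi>"
      using st by (intro continuous_on_subset[OF class_K_continuous_on[OF assms]]) auto
  qed
qed

lemma class_K_less_iff:
  assumes "\<phi> \<in> class_K r0" "0 \<le> s" "s < r0" "0 \<le> t" "t < r0"
  shows "\<phi> s < \<phi> t \<longleftrightarrow> s < t"
  using strict_mono_on_less[OF class_K_strict_mono_on[OF assms(1)]] assms by simp

lemma class_K_pos:
  assumes "\<phi> \<in> class_K r0" "0 < r" "r < r0"
  shows "0 < \<phi> r"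
  using class_K_less_iff[OF assms(1), of 0 r] class_K_zero[OF assms(1)] assms by simp

lemma class_K_IVT:
  assumes "\<phi> \<in> class_K r0" "0 \<le> r" "r < r0" "0 < y" "y < \<phi> r"
  obtains s where "0 < s" "s < r" "\<phi> s = y"
proof -
  have "\<phi> 0 = 0" using class_K_zero[OF assms(1)] .
  moreover have "continuous_on {0..r} \<phi>"
    using assms(3) by (intro continuous_on_subset[OF class_K_continuous_on[OF assms(1)]]) auto
  ultimately obtain s where "0 \<le> s" "s \<le> r" "\<phi> s = y"
    using IVT'[of \<phi> 0 y r] assms by auto
  moreover have "s \<noteq> 0" "s \<noteq> r" using assms \<open>\<phi> 0 = 0\<close> \<open>\<phi> s = y\<close> by auto
  ultimately have "0 < s" "s < r" "\<phi> s = y" by auto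
  then show ?thesis by (rule that)
qed

lemma K_end_eq_SUP:
  assumes "\<phi> \<in> class_K r0" "r0 > 0"
  shows "K_end \<phi> r0 = (SUP r\<in>{0<..<r0}. ereal (\<phi> r))"
proof -
  define M where "M = (SUP r\<in>{0<..<r0}. ereal (\<phi> r))"
  have "((\<lambda>r. ereal (\<phi> r)) \<longlongrightarrow> M) (at_left r0)"
  proof (rule order_tendstoI)
    fix a assume "a < M"
    then obtain r where r: "r \<in> {0<..<r0}" "a < ereal (\<phi> r)" by (auto simp: M_def less_SUP_iff)
    have "eventually (\<lambda>t. t \<in> {r<..<r0}) (at_left r0)"
      using r by (intro eventually_at_left_real) auto
    then show "eventually (\<lambda>t. a < ereal (\<phi> t)) (at_left r0)"
      by eventually_elim (use r class_K_less_iff[OF assms(1)] in \<open>auto intro: less_trans\<close>)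
  next
    fix a assume "M < a"
    have "eventually (\<lambda>t. t \<in> {0<..<r0}) (at_left r0)"
      using assms by (intro eventually_at_left_real) auto
    then show "eventually (\<lambda>t. ereal (\<phi> t) < a) (at_left r0)"
    proof eventually_elim
      case (elim t)
      then have "ereal (\<phi> t) \<le> M" unfolding M_def by (rule SUP_upper)
      then show ?case using \<open>M < a\<close> by simp
    qed
  qed
  then show ?thesis by (simp add: K_end_def M_def tendsto_Lim)
qed

lemma less_K_end:
  assumes "\<phi> \<in> class_K r0" "0 \<le> r" "r < r0"
  shows "ereal (\<phi> r) < K_end \<phi> r0"
proof -
  define m where "m = (r + r0) / 2"
  have m: "r < m" "m < r0" using assms(3) by (simp_all add: m_def field_simps)
  then have "\<phi> r < \<phi> m" using class_K_less_iff[OF assms(1)] assms by simp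
  also have "ereal (\<phi> m) \<le> K_end \<phi> r0"
    unfolding K_end_eq_SUP[OF assms(1) order.strict_trans1[OF assms(2,3)]]
    using assms m by (intro SUP_upper) simp
  finally show ?thesis by simp
qed

lemma strong_slope_neg_class_K_compose:
  fixes f :: "'a::metric_space \<Rightarrow> real"
  assumes "continuous_on UNIV f" "\<phi> \<in> class_K r0"
    and "strongly_slope_regular f {x. 0 < f x \<and> f x < r0}" and "0 < f x" "f x < r0"
  shows "strong_slope (\<lambda>y. - \<phi> (f y)) x = strong_slope (\<lambda>y. \<phi> (f y)) x"
proof -
  obtain \<phi>' where der: "\<And>r. 0 < r \<Longrightarrow> r < r0 \<Longrightarrow> (\<phi> has_real_derivative \<phi>' r) (at r)"
    and pos: "\<And>r. 0 < r \<Longrightarrow> r < r0 \<Longrightarrow> 0 < \<phi>' r"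
    using class_K_derivE[OF assms(2)] by blast
  have "(\<phi> has_real_derivative \<phi>' (f x)) (at (f x))" "0 < \<phi>' (f x)"
    using der pos assms(4,5) by auto
  moreover have "isCont f x" using assms(1) by (simp add: continuous_on_eq_continuous_at)
  ultimately show ?thesis
    using strong_slope_neg_compose assms(3-5) unfolding strongly_slope_regular_def by blast
qed

lemma edist_set_le_dist: "s \<in> S \<Longrightarrow> edist_set x S \<le> ereal (dist x s)"
  unfolding edist_set_def by (rule INF_lower)

lemma edist_set_nonneg: "0 \<le> edist_set x S"
  unfolding edist_set_def by (rule INF_greatest) simp

lemma edist_set_antimono: "S \<subseteq> T \<Longrightarrow> edist_set x T \<le> edist_set x S"
  unfolding edist_set_def by (rule INF_superset_mono) auto

lemma edist_set_lessE:
  assumes "edist_set x S < ereal c"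
  obtains s where "s \<in> S" "dist x s < c"
  using assms unfolding edist_set_def INF_less_iff by auto

lemma edist_set_le_approx:
  assumes "D \<ge> 0" and approx: "\<And>k'. k < k' \<Longrightarrow> \<exists>s\<in>S. dist x s \<le> k' * D"
  shows "edist_set x S \<le> ereal (k * D)"
proof (rule ereal_le_epsilon2)
  fix e :: real assume "0 < e"
  then obtain s where s: "s \<in> S" "dist x s \<le> (k + e / (D + 1)) * D"
    using approx[of "k + e / (D + 1)"] \<open>D \<ge> 0\<close> by auto
  have "(k + e / (D + 1)) * D = k * D + e * (D / (D + 1))"
    using \<open>D \<ge> 0\<close> by (simp add: field_simps)
  also have "\<dots> \<le> k * D + e"
    using \<open>D \<ge> 0\<close> \<open>0 < e\<close> by (intro add_left_mono mult_left_le) auto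
  finally show "edist_set x S \<le> ereal (k * D) + ereal e"
    using edist_set_le_dist[OF s(1), of x] s(2) by (simp add: order_trans)
qed

lemma hausdorff_edist_le_iff:
  "hausdorff_edist S T \<le> c \<longleftrightarrow> (\<forall>x\<in>S. edist_set x T \<le> c) \<and> (\<forall>x\<in>T. edist_set x S \<le> c)"
  by (simp add: hausdorff_edist_def SUP_le_iff)

section \<open>Descending to a level set\<close>

lemma slope_descent_to_level:
  fixes u :: "'a::complete_space \<Rightarrow> real" and \<psi> :: "real \<Rightarrow> real"
  assumes u: "continuous_on UNIV u"
    and \<psi>: "continuous_on {a..b} \<psi>" "strict_mono_on {a..b} \<psi>"
    and slope: "\<And>z. a < u z \<Longrightarrow> u z < b \<Longrightarrow> ereal (1/k) \<le> strong_slope (\<lambda>y. \<psi> (u y)) z"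
    and k: "0 < k" "k < k'" and x: "a \<le> u x" "u x < b"
  obtains z where "u z = a" "dist x z \<le> k' * (\<psi> (u x) - \<psi> a)"
proof -
  define S where "S = {w. a \<le> u w \<and> u w \<le> b}"
  define h where "h w = \<psi> (u w) - \<psi> a" for w
  have "closed S" unfolding S_def by (intro closed_Collect_conj closed_Collect_le continuous_intros u)
  have "continuous_on S (\<lambda>w. \<psi> (u w))"
    by (rule continuous_on_compose2[OF \<psi>(1) continuous_on_subset[OF u]]) (auto simp: S_def)
  then have "continuous_on S h" unfolding h_def by (intro continuous_intros)
  have \<psi>_le_iff: "\<psi> s \<le> \<psi> t \<longleftrightarrow> s \<le> t" if "s \<in> {a..b}" "t \<in> {a..b}" for s t
    using strict_mono_on_less_eq[OF \<psi>(2) that] .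
  have h_nonneg: "0 \<le> h w" if "w \<in> S" for w
    using that \<psi>_le_iff[of a "u w"] by (auto simp: S_def h_def)
  have "x \<in> S" using x by (simp add: S_def)
  obtain z where "z \<in> S" and z_dist: "h z + (1/k') * dist x z \<le> h x"
    and z_strict: "\<And>w. w \<in> S \<Longrightarrow> w \<noteq> z \<Longrightarrow> h z < h w + (1/k') * dist z w"
    using ekeland_variational_principle[OF \<open>closed S\<close> \<open>continuous_on S h\<close> h_nonneg \<open>x \<in> S\<close>, of "1/k'"] k
    by auto
  have "(1/k') * dist x z \<le> h x" using z_dist h_nonneg[OF \<open>z \<in> S\<close>] by linarith
  then have "dist x z \<le> k' * (\<psi> (u x) - \<psi> a)" using k by (simp add: h_def field_simps)
  moreover have "u z = a"
  proof (rule ccontr)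
    assume "u z \<noteq> a"
    have "0 \<le> (1/k') * dist x z" using k by simp
    then have "h z \<le> h x" using z_dist by linarith
    then have "u z \<le> u x" using \<psi>_le_iff[of "u z" "u x"] \<open>z \<in> S\<close> x by (simp add: S_def h_def)
    then have z_mid: "a < u z" "u z < b" using \<open>u z \<noteq> a\<close> \<open>z \<in> S\<close> x by (auto simp: S_def)
    have "isCont u z" using u by (simp add: continuous_on_eq_continuous_at)
    then have "eventually (\<lambda>y. u y \<in> {a<..<b}) (at z)"
      using z_mid unfolding isCont_def by (intro topological_tendstoD) auto
    then have "eventually (\<lambda>y. \<psi> (u z) - \<psi> (u y) \<le> (1/k') * dist z y) (at z)"
    proof eventually_elim
      case (elim y)
      show ?case
      proof (cases "y = z")
        case False
        then show ?thesis using z_strict[of y] elim by (simp add: S_def h_def)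
      qed simp
    qed
    then have "strong_slope (\<lambda>y. \<psi> (u y)) z \<le> ereal (1/k')"
      using k by (intro strong_slope_le) auto
    moreover have "ereal (1/k') < ereal (1/k)" using k by (simp add: frac_less2)
    ultimately show False using slope[OF z_mid] by (meson leD order_trans)
  qed
  ultimately show ?thesis using that by blast
qed

lemma edist_level_set_le_of_slope:
  fixes u :: "'a::complete_space \<Rightarrow> real" and \<psi> :: "real \<Rightarrow> real"
  assumes u: "continuous_on UNIV u"
    and \<psi>: "continuous_on {a..b} \<psi>" "strict_mono_on {a..b} \<psi>"
    and slope: "\<And>z. a < u z \<Longrightarrow> u z < b \<Longrightarrow> ereal (1/k) \<le> strong_slope (\<lambda>y. \<psi> (u y)) z"
    and "0 < k" and x: "a \<le> u x" "u x < b"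
  shows "edist_set x {z. u z = a} \<le> ereal (k * (\<psi> (u x) - \<psi> a))"
proof (rule edist_set_le_approx)
  show "0 \<le> \<psi> (u x) - \<psi> a" using strict_mono_on_leD[OF \<psi>(2), of a "u x"] x by simp
  show "\<exists>z\<in>{z. u z = a}. dist x z \<le> k' * (\<psi> (u x) - \<psi> a)" if "k < k'" for k'
    using slope_descent_to_level[OF u \<psi> slope \<open>0 < k\<close> that x] by blast
qed

lemma edist_level_set_le:
  fixes f :: "'a::complete_space \<Rightarrow> real"
  assumes f: "continuous_on UNIV f" and \<phi>: "\<phi> \<in> class_K r0" and "0 < k"
    and slope_pos: "\<And>z. 0 < f z \<Longrightarrow> f z < r0 \<Longrightarrow> ereal (1/k) \<le> strong_slope (\<lambda>y. \<phi> (f y)) z"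
    and slope_neg: "\<And>z. 0 < f z \<Longrightarrow> f z < r0 \<Longrightarrow> ereal (1/k) \<le> strong_slope (\<lambda>y. - \<phi> (f y)) z"
    and r: "0 < r" "r < r0" and x: "0 < f x" "f x < r0"
  shows "edist_set x {y. f y = r} \<le> ereal (k * \<bar>\<phi> r - \<phi> (f x)\<bar>)"
proof -
  have mono: "strict_mono_on {s..t} \<phi>" if "0 \<le> s" "t < r0" for s t
    by (rule monotone_on_subset[OF class_K_strict_mono_on[OF \<phi>]]) (use that in auto)
  have cont: "continuous_on {s..t} \<phi>" if "0 \<le> s" "t < r0" for s t
    by (rule continuous_on_subset[OF class_K_continuous_on[OF \<phi>]]) (use that in auto)
  consider "r < f x" | "r = f x" | "f x < r" by linarith
  then show ?thesis
  proof cases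
    case 1
    define b where "b = (f x + r0) / 2"
    have "f x < b" "b < r0" using x by (simp_all add: b_def)
    then have \<phi>_rb: "continuous_on {r..b} \<phi>" "strict_mono_on {r..b} \<phi>"
      using cont mono r by auto
    have slope_rb: "ereal (1/k) \<le> strong_slope (\<lambda>y. \<phi> (f y)) z" if "r < f z" "f z < b" for z
      using slope_pos that r \<open>b < r0\<close> by simp
    have "edist_set x {y. f y = r} \<le> ereal (k * (\<phi> (f x) - \<phi> r))"
      using 1 \<open>f x < b\<close> by (intro edist_level_set_le_of_slope[OF f \<phi>_rb slope_rb \<open>0 < k\<close>]) auto
    moreover have "\<phi> r < \<phi> (f x)" using class_K_less_iff[OF \<phi>, of r "f x"] 1 r x by simp
    ultimately show ?thesis by simp
  next
    case 2
    then show ?thesis using edist_set_le_dist[of x "{y. f y = r}" x] by simp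
  next
    case 3
    \<comment> \<open>Ascending to level r means descending for -f, measured by t \<mapsto> - \<phi> (- t).\<close>
    have neg_f: "continuous_on UNIV (\<lambda>y. - f y)" using f by (intro continuous_intros)
    have \<psi>_cont: "continuous_on {- r..- (f x / 2)} (\<lambda>t. - \<phi> (- t))"
      using r x by (intro continuous_intros continuous_on_compose2[OF cont[of "f x / 2" r]]) auto
    have \<psi>_mono: "strict_mono_on {- r..- (f x / 2)} (\<lambda>t. - \<phi> (- t))"
      using strict_mono_onD[OF mono[of "f x / 2" r]] r x by (intro strict_mono_onI) auto
    have \<psi>_slope: "ereal (1/k) \<le> strong_slope (\<lambda>y. - \<phi> (- (- f y))) z"
      if "- r < - f z" "- f z < - (f x / 2)" for z
      using slope_neg that r x by simp
    have "edist_set x {y. - f y = - r} \<le> ereal (k * (- \<phi> (- (- f x)) - - \<phi> (- (- r))))"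
      by (rule edist_level_set_le_of_slope[OF neg_f \<psi>_cont \<psi>_mono \<psi>_slope \<open>0 < k\<close>])
        (use 3 x in auto)
    moreover have "\<phi> (f x) < \<phi> r" using class_K_less_iff[OF \<phi>, of "f x" r] 3 r x by simp
    ultimately show ?thesis by simp
  qed
qed

context
  fixes f :: "'a::complete_space \<Rightarrow> real" and \<phi> :: "real \<Rightarrow> real" and r0 k :: real
  assumes f: "continuous_on UNIV f" and \<phi>: "\<phi> \<in> class_K r0" and "0 < k"
begin

lemma level_sets_hausdorff_le_of_slope:
  assumes slope_pos: "\<And>z. 0 < f z \<Longrightarrow> f z < r0 \<Longrightarrow> ereal (1/k) \<le> strong_slope (\<lambda>y. \<phi> (f y)) z"
    and slope_neg: "\<And>z. 0 < f z \<Longrightarrow> f z < r0 \<Longrightarrow> ereal (1/k) \<le> strong_slope (\<lambda>y. - \<phi> (f y)) z"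
    and r: "0 < r1" "r1 < r0" "0 < r2" "r2 < r0"
  shows "hausdorff_edist {x. f x = r1} {x. f x = r2} \<le> ereal (k * \<bar>\<phi> r1 - \<phi> r2\<bar>)"
  unfolding hausdorff_edist_le_iff
  using edist_level_set_le[OF f \<phi> \<open>0 < k\<close> slope_pos slope_neg] r
  by (auto simp: abs_minus_commute)

lemma slope_ge_of_level_sets_hausdorff_le:
  assumes levels: "\<And>r1 r2. 0 < r1 \<Longrightarrow> r1 < r0 \<Longrightarrow> 0 < r2 \<Longrightarrow> r2 < r0 \<Longrightarrow>
      hausdorff_edist {x. f x = r1} {x. f x = r2} \<le> ereal (k * \<bar>\<phi> r1 - \<phi> r2\<bar>)"
    and x: "0 < f x" "f x < r0"
  shows "ereal (1/k) \<le> strong_slope (\<lambda>y. \<phi> (f y)) x"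
proof (rule strong_slope_ge_inverse[OF \<open>0 < k\<close>])
  fix k' \<delta> :: real assume "k < k'" "0 < \<delta>"
  define D where "D = min (\<delta> / (2 * k')) (\<phi> (f x) / 2)"
  have "0 < \<phi> (f x)" using class_K_pos[OF \<phi> x] .
  then have "0 < D" "D < \<phi> (f x)" using \<open>0 < k\<close> \<open>k < k'\<close> \<open>0 < \<delta>\<close> by (auto simp: D_def)
  then obtain r where r: "0 < r" "r < f x" "\<phi> r = \<phi> (f x) - D"
    using class_K_IVT[OF \<phi> _ x(2), of "\<phi> (f x) - D"] x by auto
  have "edist_set x {y. f y = r} \<le> ereal (k * D)"
    using levels[of r "f x"] r x \<open>0 < D\<close> unfolding hausdorff_edist_le_iff by auto
  also have "\<dots> < ereal (k' * D)" using \<open>k < k'\<close> \<open>0 < D\<close> by simp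
  finally obtain y where y: "f y = r" "dist x y < k' * D" by (rule edist_set_lessE) simp
  moreover have "k' * D < \<delta>"
    using \<open>k < k'\<close> \<open>0 < k\<close> \<open>0 < \<delta>\<close> by (simp add: D_def min_def field_simps)
  ultimately show "\<exists>y. dist x y < \<delta> \<and> 0 < \<phi> (f x) - \<phi> (f y) \<and> dist x y \<le> k' * (\<phi> (f x) - \<phi> (f y))"
    using r \<open>0 < D\<close> by (intro exI[of _ y]) auto
qed

lemma slope_ge_of_metric_regular:
  assumes regular: "metric_regular_on k (\<lambda>x. if 0 \<le> f x \<and> f x < r0 then {y. \<phi> (f x) \<le> y} else {})
      ({x. 0 < f x \<and> f x < r0} \<times> {y. 0 < y \<and> ereal y < K_end \<phi> r0})"
      (is "metric_regular_on k ?F _")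
    and x: "0 < f x" "f x < r0"
  shows "ereal (1/k) \<le> strong_slope (\<lambda>y. \<phi> (f y)) x"
proof -
  have "0 < \<phi> (f x)" using class_K_pos[OF \<phi> x] .
  moreover have "ereal (\<phi> (f x)) < K_end \<phi> r0" using less_K_end[OF \<phi>] x by simp
  ultimately have "metric_regular_at k ?F x (\<phi> (f x))"
    using regular x unfolding metric_regular_on_def by auto
  then obtain \<epsilon> \<delta>0 where "0 < \<epsilon>" "0 < \<delta>0" and bound: "\<And>x' y. x' \<in> ball x \<epsilon> \<Longrightarrow>
      y \<in> ball (\<phi> (f x)) \<delta>0 \<Longrightarrow> edist_set x' {x''. y \<in> ?F x''} \<le> ereal k * edist_set y (?F x')"
    unfolding metric_regular_at_def by blast
  show ?thesis
  proof (rule strong_slope_ge_inverse[OF \<open>0 < k\<close>])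
    fix k' \<delta> :: real assume "k < k'" "0 < \<delta>"
    \<comment> \<open>Lower the value by t: regularity yields a nearby point whose value lies below it.\<close>
    define t where "t = min (\<delta>0 / 2) (\<delta> / (2 * k'))"
    have "0 < t" "t < \<delta>0" "k' * t < \<delta>"
      using \<open>0 < \<delta>0\<close> \<open>0 < \<delta>\<close> \<open>0 < k\<close> \<open>k < k'\<close> by (auto simp: t_def min_def field_simps)
    have "edist_set (\<phi> (f x) - t) (?F x) \<le> ereal t"
      using edist_set_le_dist[of "\<phi> (f x)" "?F x" "\<phi> (f x) - t"] x \<open>0 < t\<close> by (simp add: dist_real_def)
    have "edist_set x {x'. \<phi> (f x) - t \<in> ?F x'} \<le> ereal k * edist_set (\<phi> (f x) - t) (?F x)"
      using \<open>0 < \<epsilon>\<close> \<open>0 < t\<close> \<open>t < \<delta>0\<close> by (intro bound) (auto simp: dist_real_def)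
    also have "\<dots> \<le> ereal k * ereal t"
      using \<open>edist_set (\<phi> (f x) - t) (?F x) \<le> ereal t\<close> \<open>0 < k\<close> by (intro ereal_mult_left_mono) auto
    also have "\<dots> < ereal (k' * t)" using \<open>k < k'\<close> \<open>0 < t\<close> by simp
    finally obtain y where y: "\<phi> (f x) - t \<in> ?F y" "dist x y < k' * t"
      by (rule edist_set_lessE) auto
    then have "t \<le> \<phi> (f x) - \<phi> (f y)" by (simp split: if_splits)
    moreover from this have "k' * t \<le> k' * (\<phi> (f x) - \<phi> (f y))"
      using \<open>0 < k\<close> \<open>k < k'\<close> by (intro mult_left_mono) auto
    ultimately show "\<exists>y. dist x y < \<delta> \<and> 0 < \<phi> (f x) - \<phi> (f y) \<and> dist x y \<le> k' * (\<phi> (f x) - \<phi> (f y))"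
      using y \<open>0 < t\<close> \<open>k' * t < \<delta>\<close> by (intro exI[of _ y]) auto
  qed
qed

lemma edist_inverse_image_le_of_slope:
  assumes slope_pos: "\<And>z. 0 < f z \<Longrightarrow> f z < r0 \<Longrightarrow> ereal (1/k) \<le> strong_slope (\<lambda>y. \<phi> (f y)) z"
    and slope_neg: "\<And>z. 0 < f z \<Longrightarrow> f z < r0 \<Longrightarrow> ereal (1/k) \<le> strong_slope (\<lambda>y. - \<phi> (f y)) z"
    and x: "0 < f x" "f x < r0" and "0 < y"
  shows "edist_set x {x'. y \<in> (if 0 \<le> f x' \<and> f x' < r0 then {y. \<phi> (f x') \<le> y} else {})}
    \<le> ereal k * edist_set y {y'. \<phi> (f x) \<le> y'}"
    (is "edist_set x ?preimage \<le> _")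
proof (cases "\<phi> (f x) \<le> y")
  case True
  then have "edist_set x ?preimage \<le> ereal (dist x x)" using x by (intro edist_set_le_dist) simp
  then have "edist_set x ?preimage \<le> 0" by (simp only: dist_self zero_ereal_def)
  also have "\<dots> \<le> ereal k * edist_set y {y'. \<phi> (f x) \<le> y'}"
    using \<open>0 < k\<close> edist_set_nonneg[of y] by (simp add: ereal_zero_le_0_iff)
  finally show ?thesis .
next
  case False
  then obtain s where s: "0 < s" "s < f x" "\<phi> s = y"
    using class_K_IVT[OF \<phi> _ x(2) \<open>0 < y\<close>] x by auto
  have "edist_set x ?preimage \<le> edist_set x {x'. f x' = s}"
    using s x by (intro edist_set_antimono) auto
  also have "\<dots> \<le> ereal (k * (\<phi> (f x) - y))"
    using edist_level_set_le[OF f \<phi> \<open>0 < k\<close> slope_pos slope_neg, of s x] s x False by simp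
  also have "\<dots> \<le> ereal k * edist_set y {y'. \<phi> (f x) \<le> y'}"
  proof -
    have "ereal (\<phi> (f x) - y) \<le> edist_set y {y'. \<phi> (f x) \<le> y'}"
      unfolding edist_set_def by (rule INF_greatest) (simp add: dist_real_def)
    then have "ereal k * ereal (\<phi> (f x) - y) \<le> ereal k * edist_set y {y'. \<phi> (f x) \<le> y'}"
      using \<open>0 < k\<close> by (intro ereal_mult_left_mono) auto
    then show ?thesis by simp
  qed
  finally show ?thesis .
qed

lemma metric_regular_of_slope:
  assumes slope_pos: "\<And>z. 0 < f z \<Longrightarrow> f z < r0 \<Longrightarrow> ereal (1/k) \<le> strong_slope (\<lambda>y. \<phi> (f y)) z"
    and slope_neg: "\<And>z. 0 < f z \<Longrightarrow> f z < r0 \<Longrightarrow> ereal (1/k) \<le> strong_slope (\<lambda>y. - \<phi> (f y)) z"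
  shows "metric_regular_on k (\<lambda>x. if 0 \<le> f x \<and> f x < r0 then {y. \<phi> (f x) \<le> y} else {})
      ({x. 0 < f x \<and> f x < r0} \<times> {y. 0 < y \<and> ereal y < K_end \<phi> r0})"
proof -
  let ?F = "\<lambda>x. if 0 \<le> f x \<and> f x < r0 then {y. \<phi> (f x) \<le> y} else {}"
  have "metric_regular_at k ?F xb yb" if xb: "0 < f xb" "f xb < r0" and "0 < yb" for xb yb
  proof -
    have "open {x. 0 < f x \<and> f x < r0}"
      by (intro open_Collect_conj open_Collect_less continuous_intros f)
    then obtain \<epsilon> where "0 < \<epsilon>" and \<epsilon>: "ball xb \<epsilon> \<subseteq> {x. 0 < f x \<and> f x < r0}"
      using open_contains_ball_eq[of _ xb] xb by auto
    \<comment> \<open>The preimage estimate holds at every positive value, so the radius yb only keeps y positive.\<close>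
    have "\<forall>x\<in>ball xb \<epsilon>. \<forall>y\<in>ball yb yb. edist_set x {x'. y \<in> ?F x'} \<le> ereal k * edist_set y (?F x)"
    proof (intro ballI)
      fix x y assume "x \<in> ball xb \<epsilon>" "y \<in> ball yb yb"
      then have "0 < f x" "f x < r0" "0 < y" using \<epsilon> by (auto simp: dist_real_def)
      then show "edist_set x {x'. y \<in> ?F x'} \<le> ereal k * edist_set y (?F x)"
        using edist_inverse_image_le_of_slope[OF slope_pos slope_neg] by simp
    qed
    then show ?thesis using \<open>0 < \<epsilon>\<close> \<open>0 < yb\<close> unfolding metric_regular_at_def by blast
  qed
  then show ?thesis unfolding metric_regular_on_def by auto
qed

end

theorem corollary2p7:
  fixes f :: "'a::complete_space \<Rightarrow> real" and \<phi> :: "real \<Rightarrow> real" and r0 k :: real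
  assumes "continuous_on UNIV f" and "r0 > 0" and "k > 0"
    and "strongly_slope_regular f {x. 0 < f x \<and> f x < r0}"
    and "\<phi> \<in> class_K r0"
  shows "(metric_regular_on k
            (\<lambda>x. if 0 \<le> f x \<and> f x < r0 then {y. \<phi> (f x) \<le> y} else {})
            ({x. 0 < f x \<and> f x < r0} \<times> {y. 0 < y \<and> ereal y < K_end \<phi> r0})
          \<longleftrightarrow>
          (\<forall>r1\<in>{0<..<r0}. \<forall>r2\<in>{0<..<r0}.
             hausdorff_edist {x. f x = r1} {x. f x = r2} \<le> ereal (k * \<bar>\<phi> r1 - \<phi> r2\<bar>)))
       \<and> ((\<forall>r1\<in>{0<..<r0}. \<forall>r2\<in>{0<..<r0}.
             hausdorff_edist {x. f x = r1} {x. f x = r2} \<le> ereal (k * \<bar>\<phi> r1 - \<phi> r2\<bar>))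
          \<longleftrightarrow>
          (\<forall>x\<in>{x. 0 < f x \<and> f x < r0}. strong_slope (\<phi> \<circ> f) x \<ge> ereal (1 / k)))"
proof -
  note f = assms(1) and k = assms(3) and \<phi> = assms(5)
  have slope_neg: "strong_slope (\<lambda>y. - \<phi> (f y)) x = strong_slope (\<lambda>y. \<phi> (f y)) x"
    if "0 < f x" "f x < r0" for x
    using strong_slope_neg_class_K_compose[OF f \<phi> assms(4) that] .
  show ?thesis (is "(?regular \<longleftrightarrow> ?levels) \<and> (?levels \<longleftrightarrow> ?slope)")
  proof -
    have slope_iff: "?slope \<longleftrightarrow>
        (\<forall>x. 0 < f x \<longrightarrow> f x < r0 \<longrightarrow> ereal (1/k) \<le> strong_slope (\<lambda>y. \<phi> (f y)) x)"
      by (auto simp: o_def)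
    have "?regular \<Longrightarrow> ?slope"
      using slope_ge_of_metric_regular[OF f \<phi> k] unfolding slope_iff by blast
    moreover have "?slope \<Longrightarrow> ?regular"
      using metric_regular_of_slope[OF f \<phi> k] slope_neg unfolding slope_iff by simp
    moreover have "?levels \<Longrightarrow> ?slope"
      using slope_ge_of_level_sets_hausdorff_le[OF f \<phi> k] unfolding slope_iff by simp
    moreover have "?slope \<Longrightarrow> ?levels"
      using level_sets_hausdorff_le_of_slope[OF f \<phi> k] slope_neg unfolding slope_iff by simp
    ultimately show ?thesis by blast
  qed
qed

end
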